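(* Let $\mathrm{SNR}>0$, $C=\frac12\log(1+\mathrm{SNR})$, $R_{\mathrm{crit}}<R<C$, and $\theta=\theta(R)$. Define $$\beta^*=\frac{\cos^2\theta}{2}+\frac{\cos^2\theta}{2}\sqrt{1+\frac{4}{\mathrm{SNR}\cos^2\theta}}-1,\qquad r(\beta)=(1+\beta)\tan\theta.$$ Then $$\frac{\mathrm{SNR}\,(\beta^* )^2}{2}+E_h\big(r(\beta^* )^2\,\mathrm{SNR}\big)=E_{\mathrm{sp}}(R;\mathrm{SNR}).$$
   Context: Logarithms are natural. $\theta(R)\in(0,\pi/2]$ is defined by $\sin\theta(R)=e^{-R}$. $E_h(\mu)=\frac12(\mu-1-\log\mu)$ if $\mu\ge1$ and $E_h(\mu)=0$ otherwise. $R_{\mathrm{crit}}=\frac12\log\Big(\frac12+\frac{\mathrm{SNR}}4+\frac12\sqrt{1+\frac{\mathrm{SNR}^2}{4}}\Big)$. $E_{\mathrm{sp}}(R;\mathrm{SNR})=E_G(\beta_G,\rho_G)$ with $E_G(\beta,\rho)=\frac12\big[(1-\beta)(1+\rho)+\mathrm{SNR}+\rho\log\beta+\log(\beta-\frac{\mathrm{SNR}}{1+\rho})-2\rho R\big]$, $\beta_G=e^{2R}$, $\rho_G=\frac{\mathrm{SNR}}{2\beta_G}\Big(1+\sqrt{1+\frac{4\beta_G}{\mathrm{SNR}(\beta_G-1)}}\Big)-1$. *)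

theory Defs
  imports "HOL-Analysis.Analysis"
begin

definition theta :: "real \<Rightarrow> real" where
  "theta R = arcsin (exp (- R))"

definition E_h :: "real \<Rightarrow> real" where
  "E_h \<mu> = (if \<mu> \<ge> 1 then (\<mu> - 1 - ln \<mu>) / 2 else 0)"

definition R_crit :: "real \<Rightarrow> real" where
  "R_crit SNR = ln (1/2 + SNR/4 + sqrt (1 + SNR\<^sup>2 / 4) / 2) / 2"

definition capacity :: "real \<Rightarrow> real" where
  "capacity SNR = ln (1 + SNR) / 2"

definition E_G :: "real \<Rightarrow> real \<Rightarrow> real \<Rightarrow> real \<Rightarrow> real" where
  "E_G SNR R \<beta> \<rho> = ((1 - \<beta>) * (1 + \<rho>) + SNR + \<rho> * ln \<beta>
      + ln (\<beta> - SNR / (1 + \<rho>)) - 2 * \<rho> * R) / 2"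

definition beta_G :: "real \<Rightarrow> real" where
  "beta_G R = exp (2 * R)"

definition rho_G :: "real \<Rightarrow> real \<Rightarrow> real" where
  "rho_G SNR R = SNR / (2 * beta_G R) *
     (1 + sqrt (1 + 4 * beta_G R / (SNR * (beta_G R - 1)))) - 1"

definition E_sp :: "real \<Rightarrow> real \<Rightarrow> real" where
  "E_sp R SNR = E_G SNR R (beta_G R) (rho_G SNR R)"

end

theory Submission
  imports Defs
begin

text \<open>Put \<open>B = \<beta>\<^sub>G = e\<^sup>2\<^sup>R = 1/sin\<^sup>2\<theta>\<close>, so that \<open>cos\<^sup>2\<theta> = 1 - 1/B\<close> and \<open>tan\<^sup>2\<theta> = 1/(B - 1)\<close>.
  Then \<open>u = 1 + \<beta>*\<close> is the positive root of \<open>B\<cdot>SNR\<cdot>u\<^sup>2 = (B - 1)(SNR\<cdot>u + 1)\<close>, and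
  \<open>1 + \<rho>\<^sub>G = SNR\<cdot>u/(B - 1)\<close>. The argument of \<open>E\<^sub>h\<close> is \<open>u(1 + \<rho>\<^sub>G)\<close>; the terms
  \<open>\<rho> log \<beta> - 2\<rho>R\<close> of \<open>E\<^sub>G\<close> cancel, and \<open>\<beta>\<^sub>G - SNR/(1 + \<rho>\<^sub>G) = 1/(u(1 + \<rho>\<^sub>G))\<close>, so both
  sides agree by the quadratic. The hypothesis \<open>R < C\<close>, i.e. \<open>B < 1 + SNR\<close>, makes the
  argument of \<open>E\<^sub>h\<close> at least 1, so that \<open>E\<^sub>h\<close> is on its nontrivial branch; \<open>R > R\<^sub>c\<^sub>r\<^sub>i\<^sub>t\<close> is
  only needed to ensure \<open>R > 0\<close>.\<close>

definition beta_star :: "real \<Rightarrow> real \<Rightarrow> real" where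
  "beta_star SNR c2 = c2 / 2 + c2 / 2 * sqrt (1 + 4 / (SNR * c2)) - 1"

lemma R_crit_pos:
  assumes "0 < SNR"
  shows "0 < R_crit SNR"
proof -
  have "1 \<le> sqrt (1 + SNR\<^sup>2 / 4)" by simp
  then have "1 < 1/2 + SNR/4 + sqrt (1 + SNR\<^sup>2 / 4) / 2" using assms by linarith
  then show ?thesis unfolding R_crit_def by simp
qed

lemma one_lt_beta_G: "0 < R \<Longrightarrow> 1 < beta_G R"
  unfolding beta_G_def by simp

lemma sin_theta:
  assumes "0 \<le> R"
  shows "sin (theta R) = exp (- R)"
proof -
  have "- 1 \<le> exp (- R)" "exp (- R) \<le> 1"
    using exp_gt_zero[of "- R"] assms by (linarith, simp)
  then show ?thesis unfolding theta_def by (rule sin_arcsin)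
qed

lemma sin_theta_squared: "0 \<le> R \<Longrightarrow> (sin (theta R))\<^sup>2 = 1 / beta_G R"
  by (simp add: sin_theta beta_G_def power2_eq_square exp_minus field_simps flip: exp_add)

lemma cos_theta_squared: "0 \<le> R \<Longrightarrow> (cos (theta R))\<^sup>2 = 1 - 1 / beta_G R"
  by (simp add: cos_squared_eq sin_theta_squared)

lemma tan_theta_squared:
  assumes "0 < R"
  shows "(tan (theta R))\<^sup>2 = 1 / (beta_G R - 1)"
  using one_lt_beta_G[OF assms]
  by (simp add: tan_def power_divide sin_theta_squared cos_theta_squared assms less_imp_le
      field_simps)

lemma beta_star_quadratic:
  assumes "0 < SNR" and "0 < c2"
  shows "SNR * (1 + beta_star SNR c2)\<^sup>2 = SNR * c2 * (1 + beta_star SNR c2) + c2"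
proof -
  define w where "w = sqrt (1 + 4 / (SNR * c2))"
  define v where "v = 1 + beta_star SNR c2"
  have "w\<^sup>2 = 1 + 4 / (SNR * c2)" unfolding w_def using assms by simp
  then have w: "SNR * c2 * w\<^sup>2 = SNR * c2 + 4" using assms by (simp add: field_simps)
  have v: "v = c2 / 2 * (1 + w)"
    unfolding v_def beta_star_def w_def by (simp add: algebra_simps)
  have "4 * (SNR * v\<^sup>2 - SNR * c2 * v - c2) = c2 * (SNR * c2 * w\<^sup>2 - SNR * c2 - 4)"
    unfolding v by (simp add: power2_eq_square field_simps)
  then show ?thesis using w unfolding v_def by simp
qed

lemma beta_star_plus_one_pos:
  assumes "0 < SNR" and "0 < c2"
  shows "0 < 1 + beta_star SNR c2"
proof -
  have "0 \<le> c2 / 2 * sqrt (1 + 4 / (SNR * c2))" using assms by (intro mult_nonneg_nonneg) auto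
  then show ?thesis unfolding beta_star_def using assms by linarith
qed

lemma beta_star_root:
  assumes "0 < SNR" and "1 < B"
  shows "B * SNR * (1 + beta_star SNR (1 - 1 / B))\<^sup>2
    = (B - 1) * (SNR * (1 + beta_star SNR (1 - 1 / B)) + 1)"
proof -
  define u where "u = 1 + beta_star SNR (1 - 1 / B)"
  have "B * SNR * u\<^sup>2 = B * (SNR * (1 - 1 / B) * u + (1 - 1 / B))"
    using beta_star_quadratic[OF assms(1), of "1 - 1 / B"] assms(2) unfolding u_def by simp
  also have "\<dots> = (B - 1) * (SNR * u + 1)"
    using assms(2) by (simp add: field_simps)
  finally show ?thesis unfolding u_def .
qed

lemma rho_G_eq_beta_star:
  assumes "1 < beta_G R"
  shows "1 + rho_G SNR R = SNR * (1 + beta_star SNR (1 - 1 / beta_G R)) / (beta_G R - 1)"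
proof -
  define B where "B = beta_G R"
  have "B > 1" using assms B_def by simp
  then have "4 * B / (SNR * (B - 1)) = 4 / (SNR * (1 - 1 / B))"
    by (simp add: field_simps)
  then show ?thesis
    unfolding rho_G_def beta_star_def B_def[symmetric] using \<open>B > 1\<close>
    by (simp add: field_simps)
qed

lemma E_G_at_beta_G:
  "E_G SNR R (beta_G R) \<rho> =
     ((1 - beta_G R) * (1 + \<rho>) + SNR + ln (beta_G R - SNR / (1 + \<rho>))) / 2"
  unfolding E_G_def by (simp add: beta_G_def)

lemma beta_G_lt_one_plus_SNR:
  assumes "0 < SNR" and "R < capacity SNR"
  shows "beta_G R < 1 + SNR"
  using exp_less_mono[of "2 * R" "ln (1 + SNR)"] assms
  unfolding beta_G_def capacity_def by simp

context
  fixes B S u y :: real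
  assumes B: "1 < B" and S: "0 < S" and u: "0 < u"
    and root: "B * S * u\<^sup>2 = (B - 1) * (S * u + 1)"
    and y: "y = S * u / (B - 1)"
begin

lemma root_inverse_identity: "B - S / y = 1 / (u * y)"
proof -
  have "(B - (B - 1) / u) * (S * u\<^sup>2) = B * S * u\<^sup>2 - (B - 1) * S * u"
    using u by (simp add: power2_eq_square field_simps)
  also have "\<dots> = B - 1" using root by (simp add: algebra_simps)
  finally have "B - (B - 1) / u = (B - 1) / (S * u\<^sup>2)"
    using S u by (simp add: eq_divide_eq)
  moreover have "S / y = (B - 1) / u" using S y by simp
  moreover have "1 / (u * y) = (B - 1) / (S * u\<^sup>2)"
    using y by (simp add: power2_eq_square mult.assoc)
  ultimately show ?thesis by simp
qed

lemma root_exponent_identity: "S * (u - 1)\<^sup>2 + u * y - 1 = (1 - B) * y + S"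
proof -
  have "S * u\<^sup>2 + u * y = B * S * u\<^sup>2 / (B - 1)"
    using B y by (simp add: power2_eq_square field_simps)
  also have "\<dots> = S * u + 1" using root B by simp
  finally have "S * u\<^sup>2 + u * y = S * u + 1" .
  moreover have "(1 - B) * y = - S * u" using B y by (simp add: field_simps)
  ultimately show ?thesis by (simp add: power2_eq_square algebra_simps)
qed

text \<open>If \<open>v = S u\<close> were below \<open>B - 1\<close>, then \<open>B v\<^sup>2 < (B - 1)\<^sup>2(v + 1)\<close>, whereas the root
  equation gives \<open>B v\<^sup>2 = S(B - 1)(v + 1) > (B - 1)\<^sup>2(v + 1)\<close>.\<close>
lemma root_lower_bound:
  assumes "B < 1 + S"
  shows "B - 1 \<le> S * u"
proof (rule ccontr)
  define v where "v = S * u"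
  assume "\<not> B - 1 \<le> S * u"
  then have v: "0 < v" "v < B - 1" using S u v_def by auto
  have "B * v\<^sup>2 = S * (B - 1) * (v + 1)"
    using arg_cong[OF root, of "(*) S"] unfolding v_def by (simp add: power2_eq_square algebra_simps)
  also have "\<dots> > (B - 1) * (B - 1) * (v + 1)"
    using assms B v by (intro mult_strict_right_mono) auto
  finally have "(B - 1)\<^sup>2 * (v + 1) < v\<^sup>2 + (B - 1) * v\<^sup>2"
    by (simp add: power2_eq_square algebra_simps)
  moreover have "v\<^sup>2 < (B - 1)\<^sup>2" using v by (simp add: power_strict_mono)
  moreover have "(B - 1) * v\<^sup>2 \<le> (B - 1)\<^sup>2 * v"
    using v by (simp add: power2_eq_square mult_left_mono mult_right_mono)
  ultimately show False by (simp add: algebra_simps)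
qed

lemma root_exponent_ge_one:
  assumes "B < 1 + S"
  shows "1 \<le> u * y"
proof -
  have "B * (u * y) = B * S * u\<^sup>2 / (B - 1)" using y by (simp add: power2_eq_square)
  also have "\<dots> = S * u + 1" using root B by simp
  finally have "B * 1 \<le> B * (u * y)" using root_lower_bound[OF assms] by simp
  then show ?thesis using B by (simp add: mult_le_cancel_left_pos)
qed

lemma root_exponent_eq_E_G:
  assumes "B < 1 + S"
  shows "S * (u - 1)\<^sup>2 / 2 + E_h (u * y) = ((1 - B) * y + S + ln (B - S / y)) / 2"
proof -
  have "0 < y" using S u B y by simp
  then have "ln (B - S / y) = - ln (u * y)"
    using u by (simp add: root_inverse_identity ln_div)
  then show ?thesis
    using root_exponent_identity root_exponent_ge_one[OF assms] unfolding E_h_def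
    by (simp add: field_simps)
qed

end

theorem mainTheorem3:
  fixes SNR R :: real
  assumes "SNR > 0"
    and "R_crit SNR < R" and "R < capacity SNR"
  shows "let \<theta> = theta R;
             c2 = (cos \<theta>)\<^sup>2;
             \<beta>s = c2 / 2 + c2 / 2 * sqrt (1 + 4 / (SNR * c2)) - 1;
             r = (\<lambda>\<beta>. (1 + \<beta>) * tan \<theta>)
         in SNR * \<beta>s\<^sup>2 / 2 + E_h ((r \<beta>s)\<^sup>2 * SNR) = E_sp R SNR"
proof -
  have R: "0 < R" using R_crit_pos[OF assms(1)] assms(2) by linarith
  define B where "B = beta_G R"
  have B: "1 < B" using one_lt_beta_G[OF R] B_def by simp
  define u where "u = 1 + beta_star SNR (1 - 1 / B)"
  define y where "y = SNR * u / (B - 1)"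
  have u: "0 < u" using beta_star_plus_one_pos[OF assms(1)] B u_def by simp
  have root: "B * SNR * u\<^sup>2 = (B - 1) * (SNR * u + 1)"
    using beta_star_root[OF assms(1) B] unfolding u_def .
  have rho: "1 + rho_G SNR R = y"
    using rho_G_eq_beta_star B unfolding B_def y_def u_def by simp
  have "SNR * (u - 1)\<^sup>2 / 2 + E_h ((u * tan (theta R))\<^sup>2 * SNR) = E_sp R SNR"
  proof -
    have "(u * tan (theta R))\<^sup>2 * SNR = u * y"
      unfolding power_mult_distrib tan_theta_squared[OF R] y_def B_def
      by (simp add: power2_eq_square)
    moreover have "B < 1 + SNR" using beta_G_lt_one_plus_SNR assms(1,3) B_def by simp
    ultimately show ?thesis
      using root_exponent_eq_E_G[OF B assms(1) u root y_def]
      by (simp only: E_sp_def E_G_at_beta_G rho B_def)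
  qed
  moreover have "(cos (theta R))\<^sup>2 = 1 - 1 / B" using cos_theta_squared R B_def by simp
  ultimately show ?thesis
    unfolding Let_def beta_star_def[symmetric] u_def by simp
qed

end
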